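(* Let $N\ge2$ and let $W_N=|W_N\rangle\langle W_N|$, where $|W_N\rangle=\frac{1}{\sqrt N}(|10\cdots0\rangle+|01\cdots0\rangle+\cdots+|00\cdots1\rangle)$. Then $C_S(W_N)\ge N-1$.
   Context: $\mathbb{I},\sigma_X,\sigma_Y,\sigma_Z$ are the identity and Pauli matrices. The notation $\sum_\pi \mathbb{I}^{\otimes j}\otimes A^{\otimes (N-j)}$ denotes the sum, over all distinct placements, of tensor products in which exactly $j$ of the $N$ factors are $\mathbb{I}$ and the other $N-j$ are $A$ (each distinct arrangement counted once). Measurement complexity: for an $N$-qubit permutation-invariant operator $\rho$, $C_S(\rho)$ is the minimal $n_A$ such that there exist real $b_i,c_i,d_i$ and real $\alpha_{ij}$ ($1\le i\le n_A$, $0\le j\le N$) with $\rho=\sum_{i=1}^{n_A}\sum_{j=0}^{N}\alpha_{ij}\sum_\pi\mathbb{I}^{\otimes j}\otimes A_i^{\otimes(N-j)}$, $A_i=b_i\sigma_X+c_i\sigma_Y+d_i\sigma_Z$. *)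

theory Defs
  imports Complex_Main
begin

text \<open>Single-qubit operators as 2x2 complex matrices indexed by bool
  (False = |0>, True = |1>). N-qubit operators as complex-valued functions of
  pairs of bit strings (bool lists); only entries for strings of length N matter.\<close>

type_synonym qop1 = "bool \<Rightarrow> bool \<Rightarrow> complex"
type_synonym qopN = "bool list \<Rightarrow> bool list \<Rightarrow> complex"

definition Id1 :: qop1 where
  "Id1 x y = (if x = y then 1 else 0)"

definition sigmaX :: qop1 where
  "sigmaX x y = (if x \<noteq> y then 1 else 0)"

definition sigmaY :: qop1 where
  "sigmaY x y = (if x = False \<and> y = True then - \<i> else if x = True \<and> y = False then \<i> else 0)"

definition sigmaZ :: qop1 where
  "sigmaZ x y = (if x = y then (if x then -1 else 1) else 0)"

definition tensorN :: "nat \<Rightarrow> (nat \<Rightarrow> qop1) \<Rightarrow> qopN" where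
  "tensorN N M x y = (\<Prod>k<N. M k (x ! k) (y ! k))"

definition sym_sum :: "nat \<Rightarrow> nat \<Rightarrow> qop1 \<Rightarrow> qopN" where
  "sym_sum N j A x y =
     (\<Sum>S\<in>{S. S \<subseteq> {..<N} \<and> card S = j}.
        tensorN N (\<lambda>k. if k \<in> S then Id1 else A) x y)"

definition pauli_comb :: "real \<Rightarrow> real \<Rightarrow> real \<Rightarrow> qop1" where
  "pauli_comb b c d x y = of_real b * sigmaX x y + of_real c * sigmaY x y + of_real d * sigmaZ x y"

definition CS_decomp :: "nat \<Rightarrow> qopN \<Rightarrow> nat \<Rightarrow> bool" where
  "CS_decomp N rho n \<longleftrightarrow>
     (\<exists>(b::nat \<Rightarrow> real) (c::nat \<Rightarrow> real) (d::nat \<Rightarrow> real) (alpha::nat \<Rightarrow> nat \<Rightarrow> real).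
        \<forall>x y. length x = N \<longrightarrow> length y = N \<longrightarrow>
          rho x y = (\<Sum>i=1..n. \<Sum>j=0..N.
                       of_real (alpha i j) * sym_sum N j (pauli_comb (b i) (c i) (d i)) x y))"

definition C_S :: "nat \<Rightarrow> qopN \<Rightarrow> nat" where
  "C_S N rho = (LEAST n. CS_decomp N rho n)"

definition W_ket :: "nat \<Rightarrow> bool list \<Rightarrow> complex" where
  "W_ket N x = (if length x = N \<and> length (filter id x) = 1 then 1 / of_real (sqrt (real N)) else 0)"

definition W_op :: "nat \<Rightarrow> qopN" where
  "W_op N x y = W_ket N x * cnj (W_ket N y)"

end

theory Submission
  imports Defs
begin

text \<open>The lower bound pairs an operator \<open>\<rho>\<close> with the Pauli strings
  \<open>P j = \<sigma>X \<otimes> \<dots> \<otimes> \<sigma>X \<otimes> \<sigma>Z \<otimes> \<dots> \<otimes> \<sigma>Z\<close> with \<open>j\<close> factors \<open>\<sigma>X\<close>. Both factors are traceless,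
  so \<open>tr (P j \<cdot> sym_sum N j' A)\<close> vanishes unless \<open>j' = 0\<close>, and for \<open>A = b \<sigma>X + c \<sigma>Y + d \<sigma>Z\<close>
  it is \<open>(2 b) ^ j * (2 d) ^ (N - j)\<close>. A decomposition of \<open>W N\<close> with \<open>n\<close> terms therefore
  yields \<open>\<Sum>i. \<alpha> i 0 * (2 b i) ^ j * (2 d i) ^ (N - j) = tr (P j \<cdot> W N)\<close>, which is \<open>2 / N\<close> for
  \<open>j = 2\<close> and \<open>0\<close> for \<open>2 < j \<le> N\<close>; eliminating the terms one at a time shows that such a
  gap forces at least \<open>N - 1\<close> terms.

  As \<open>C_S\<close> is a least element, a decomposition must also exist. The \<open>N\<close>-fold tensor power
  of \<open>|\<phi>\<rangle>\<langle>\<phi>|\<close>, \<open>\<phi> = |0\<rangle> + r e^(-i\<theta>) |1\<rangle>\<close>, has the required form, and its entry at \<open>(x, y)\<close>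
  depends only on the excitation numbers of \<open>x\<close> and \<open>y\<close>. Averaging \<open>\<theta>\<close> over the
  \<open>(N + 1)\<close>-st roots of unity keeps the entries with equal excitation numbers, and a signed
  combination of values of \<open>r\<^sup>2\<close> whose first \<open>N + 1\<close> moments are \<open>0, 1, 0, \<dots>, 0\<close> keeps
  exactly the one-excitation block, which is \<open>N \<cdot> W N\<close>.\<close>

section \<open>Lower bound\<close>

text \<open>Replacing \<open>l i\<close> by \<open>l i * (Q i0 * P i - P i0 * Q i)\<close> deletes the term \<open>i0\<close> and lowers
  \<open>N\<close> by one; each new moment is a combination of two consecutive old ones, so the gap
  persists.\<close>
lemma card_ge_of_moment_gap:
  fixes l P Q :: "'i \<Rightarrow> 'a::idom"
  assumes "finite I" "1 \<le> k" "k \<le> N"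
    and "(\<Sum>i\<in>I. l i * P i ^ k * Q i ^ (N - k)) \<noteq> 0"
    and "\<And>j. k < j \<Longrightarrow> j \<le> N \<Longrightarrow> (\<Sum>i\<in>I. l i * P i ^ j * Q i ^ (N - j)) = 0"
  shows "N + 1 \<le> card I + k"
  using assms
proof (induction N arbitrary: I l)
  case 0
  then show ?case by simp
next
  case (Suc M)
  define \<mu> where "\<mu> j = (\<Sum>i\<in>I. l i * P i ^ j * Q i ^ (Suc M - j))" for j
  show ?case
  proof (cases "k = Suc M")
    case True
    then have "I \<noteq> {}" using Suc.prems(4) by auto
    then show ?thesis using True Suc.prems(1) by (simp add: Suc_leI card_gt_0_iff)
  next
    case False
    then have kM: "k \<le> M" using Suc.prems(3) by simp
    obtain i0 where i0: "i0 \<in> I" "l i0 * P i0 ^ k * Q i0 ^ (Suc M - k) \<noteq> 0"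
      using Suc.prems(4) by (meson sum.neutral)
    have "P i0 \<noteq> 0" using i0(2) Suc.prems(2) by (auto simp: zero_power)
    define l' where "l' i = l i * (Q i0 * P i - P i0 * Q i)" for i
    have shift: "(\<Sum>i\<in>I - {i0}. l' i * P i ^ j * Q i ^ (M - j)) = Q i0 * \<mu> (Suc j) - P i0 * \<mu> j"
      if "j \<le> M" for j
    proof -
      have "(\<Sum>i\<in>I - {i0}. l' i * P i ^ j * Q i ^ (M - j)) = (\<Sum>i\<in>I. l' i * P i ^ j * Q i ^ (M - j))"
        using Suc.prems(1) i0(1) by (intro sum.mono_neutral_left) (auto simp: l'_def)
      also have "\<dots> = (\<Sum>i\<in>I. Q i0 * (l i * P i ^ Suc j * Q i ^ (Suc M - Suc j))
                                - P i0 * (l i * P i ^ j * Q i ^ (Suc M - j)))"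
      proof (intro sum.cong refl)
        fix i
        have "Suc M - j = Suc (M - j)" using that by simp
        then show "l' i * P i ^ j * Q i ^ (M - j) = Q i0 * (l i * P i ^ Suc j * Q i ^ (Suc M - Suc j))
                                - P i0 * (l i * P i ^ j * Q i ^ (Suc M - j))"
          by (simp add: l'_def algebra_simps)
      qed
      finally show ?thesis
        by (simp add: \<mu>_def sum_subtractf sum_distrib_left)
    qed
    have "M + 1 \<le> card (I - {i0}) + k"
    proof (rule Suc.IH)
      show "(\<Sum>i\<in>I - {i0}. l' i * P i ^ k * Q i ^ (M - k)) \<noteq> 0"
        using shift[OF kM] Suc.prems(4) Suc.prems(5)[of "Suc k"] kM \<open>P i0 \<noteq> 0\<close> by (simp add: \<mu>_def)
      show "(\<Sum>i\<in>I - {i0}. l' i * P i ^ j * Q i ^ (M - j)) = 0" if "k < j" "j \<le> M" for j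
        using shift[of j] Suc.prems(5)[of j] Suc.prems(5)[of "Suc j"] that by (simp add: \<mu>_def)
    qed (use Suc.prems kM in simp_all)
    moreover have "Suc (card (I - {i0})) = card I"
      using Suc.prems(1) i0(1) by (rule card_Suc_Diff1)
    ultimately show ?thesis by simp
  qed
qed

definition bitstrings :: "nat \<Rightarrow> bool list set" where
  "bitstrings N = {xs. length xs = N}"

lemma finite_bitstrings: "finite (bitstrings N)"
  using finite_lists_length_eq[of "UNIV :: bool set" N] by (simp add: bitstrings_def)

lemma bitstrings_Suc: "bitstrings (Suc N) = (\<lambda>(a, xs). a # xs) ` (UNIV \<times> bitstrings N)"
  by (auto simp: bitstrings_def image_iff length_Suc_conv)

lemma sum_bitstrings_prod:
  fixes g :: "nat \<Rightarrow> bool \<Rightarrow> 'a::comm_semiring_1"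
  shows "(\<Sum>x\<in>bitstrings N. \<Prod>k<N. g k (x ! k)) = (\<Prod>k<N. \<Sum>a\<in>UNIV. g k a)"
proof (induction N arbitrary: g)
  case 0
  have "bitstrings 0 = {[]}" by (auto simp: bitstrings_def)
  then show ?case by simp
next
  case (Suc N)
  have inj: "inj_on (\<lambda>(a, xs). a # xs) (UNIV \<times> bitstrings N)" by (auto simp: inj_on_def)
  have "(\<Sum>x\<in>bitstrings (Suc N). \<Prod>k<Suc N. g k (x ! k))
      = (\<Sum>a\<in>UNIV. \<Sum>xs\<in>bitstrings N. g 0 a * (\<Prod>k<N. g (Suc k) (xs ! k)))"
    unfolding bitstrings_Suc sum.reindex[OF inj] sum.cartesian_product
    by (simp add: prod.lessThan_Suc_shift split_def del: prod.lessThan_Suc)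
  also have "\<dots> = (\<Sum>a\<in>UNIV. g 0 a) * (\<Prod>k<N. \<Sum>a\<in>UNIV. g (Suc k) a)"
    by (simp add: sum_product[symmetric] Suc.IH[of "\<lambda>k. g (Suc k)"])
  finally show ?case by (simp add: prod.lessThan_Suc_shift del: prod.lessThan_Suc)
qed

definition trace1 :: "qop1 \<Rightarrow> qop1 \<Rightarrow> complex" where
  "trace1 P M = (\<Sum>a\<in>UNIV. \<Sum>b\<in>UNIV. P b a * M a b)"

definition traceN :: "nat \<Rightarrow> qopN \<Rightarrow> qopN \<Rightarrow> complex" where
  "traceN N P \<rho> = (\<Sum>x\<in>bitstrings N. \<Sum>y\<in>bitstrings N. P y x * \<rho> x y)"

lemma traceN_tensorN: "traceN N (tensorN N P) (tensorN N M) = (\<Prod>k<N. trace1 (P k) (M k))"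
proof -
  have "traceN N (tensorN N P) (tensorN N M)
      = (\<Sum>x\<in>bitstrings N. \<Prod>k<N. \<Sum>b\<in>UNIV. P k b (x ! k) * M k (x ! k) b)"
    unfolding traceN_def tensorN_def
    by (intro sum.cong refl)
       (simp add: sum_bitstrings_prod[of "\<lambda>k b. P k b (_ ! k) * M k (_ ! k) b", symmetric] prod.distrib)
  also have "\<dots> = (\<Prod>k<N. trace1 (P k) (M k))"
    using sum_bitstrings_prod[of "\<lambda>k a. \<Sum>b\<in>UNIV. P k b a * M k a b" N]
    by (simp add: trace1_def)
  finally show ?thesis .
qed

lemma traceN_sum:
  "finite F \<Longrightarrow> traceN N P (\<lambda>x y. \<Sum>s\<in>F. \<rho> s x y) = (\<Sum>s\<in>F. traceN N P (\<rho> s))"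
  unfolding traceN_def by (simp add: sum_distrib_left sum.swap[of _ F])

lemma traceN_scale: "traceN N P (\<lambda>x y. c * \<rho> x y) = c * traceN N P \<rho>"
  unfolding traceN_def by (simp add: sum_distrib_left algebra_simps)

lemma traceN_cong:
  "(\<And>x y. length x = N \<Longrightarrow> length y = N \<Longrightarrow> \<rho> x y = \<sigma> x y) \<Longrightarrow> traceN N P \<rho> = traceN N P \<sigma>"
  unfolding traceN_def bitstrings_def by (intro sum.cong refl) auto

lemma traceN_sym_sum:
  assumes traceless: "\<And>k. k < N \<Longrightarrow> trace1 (P k) Id1 = 0"
  shows "traceN N (tensorN N P) (sym_sum N j A) = (if j = 0 then \<Prod>k<N. trace1 (P k) A else 0)"
proof -
  let ?F = "{S. S \<subseteq> {..<N} \<and> card S = j}"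
  have "finite ?F" by (rule finite_subset[of _ "Pow {..<N}"]) auto
  then have "traceN N (tensorN N P) (sym_sum N j A)
      = (\<Sum>S\<in>?F. \<Prod>k<N. trace1 (P k) (if k \<in> S then Id1 else A))"
    unfolding sym_sum_def[abs_def] by (simp add: traceN_sum traceN_tensorN if_distrib)
  also have "\<dots> = (if j = 0 then \<Prod>k<N. trace1 (P k) A else 0)"
  proof (cases "j = 0")
    case True
    then have "?F = {{}}" by (auto dest: finite_subset)
    then show ?thesis using True by simp
  next
    case False
    have "(\<Sum>S\<in>?F. \<Prod>k<N. trace1 (P k) (if k \<in> S then Id1 else A)) = 0"
    proof (intro sum.neutral ballI)
      fix S assume "S \<in> ?F"
      with False have "S \<noteq> {}" "S \<subseteq> {..<N}" by auto
      then obtain k where "k \<in> S" "k < N" by blast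
      then show "(\<Prod>k<N. trace1 (P k) (if k \<in> S then Id1 else A)) = 0"
        by (intro prod_zero) (auto intro!: bexI[of _ k] simp: traceless)
    qed
    then show ?thesis using False by simp
  qed
  finally show ?thesis .
qed

definition xz_string :: "nat \<Rightarrow> nat \<Rightarrow> qop1" where
  "xz_string j k = (if k < j then sigmaX else sigmaZ)"

lemma trace1_xz_string_Id1: "trace1 (xz_string j k) Id1 = 0"
  by (simp add: trace1_def xz_string_def sigmaX_def sigmaZ_def Id1_def UNIV_bool)

lemma trace1_xz_string_pauli_comb:
  "trace1 (xz_string j k) (pauli_comb b c d) = (if k < j then 2 * of_real b else 2 * of_real d)"
  by (simp add: trace1_def xz_string_def sigmaX_def sigmaY_def sigmaZ_def pauli_comb_def UNIV_bool)

lemma prod_lessThan_if_less: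
  "j \<le> N \<Longrightarrow> (\<Prod>k<N. if k < j then u else v) = u ^ j * (v :: 'a::comm_monoid_mult) ^ (N - j)"
proof (induction N)
  case (Suc N)
  then show ?case
    by (cases "j = Suc N") (auto simp: Suc_diff_le algebra_simps)
qed simp

lemma traceN_xz_string_sym_sum:
  "j \<le> N \<Longrightarrow> traceN N (tensorN N (xz_string j)) (sym_sum N i (pauli_comb b c d))
     = (if i = 0 then (2 * of_real b) ^ j * (2 * of_real d) ^ (N - j) else 0)"
  by (simp add: traceN_sym_sum trace1_xz_string_Id1 trace1_xz_string_pauli_comb
      prod_lessThan_if_less)

definition single_excitation :: "nat \<Rightarrow> nat \<Rightarrow> bool list" where
  "single_excitation N a = map (\<lambda>k. k = a) [0..<N]"

lemma length_single_excitation [simp]: "length (single_excitation N a) = N"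
  by (simp add: single_excitation_def)

lemma nth_single_excitation [simp]: "k < N \<Longrightarrow> single_excitation N a ! k = (k = a)"
  by (simp add: single_excitation_def)

lemma inj_on_single_excitation: "inj_on (single_excitation N) {..<N}"
proof
  fix a b assume "a \<in> {..<N}" "single_excitation N a = single_excitation N b"
  then show "a = b" using nth_single_excitation[of a N a] nth_single_excitation[of a N b] by simp
qed

lemma single_excitations_eq:
  "{x. length x = N \<and> length (filter id x) = 1} = single_excitation N ` {..<N}"
proof (intro set_eqI iffI)
  fix x assume "x \<in> {x. length x = N \<and> length (filter id x) = 1}"
  then have "length x = N" "card {k. k < N \<and> x ! k} = 1"
    by (auto simp: length_filter_conv_card)
  then obtain a where a: "{k. k < N \<and> x ! k} = {a}" by (auto simp: card_1_singleton_iff)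
  then have "x = single_excitation N a"
    using \<open>length x = N\<close> by (intro nth_equalityI) auto
  moreover have "a < N" using a by auto
  ultimately show "x \<in> single_excitation N ` {..<N}" by blast
next
  fix x assume "x \<in> single_excitation N ` {..<N}"
  then obtain a where "a < N" "x = single_excitation N a" by blast
  moreover have "{k. k < N \<and> single_excitation N a ! k} = {a}" using \<open>a < N\<close> by auto
  ultimately show "x \<in> {x. length x = N \<and> length (filter id x) = 1}"
    by (simp add: length_filter_conv_card)
qed

lemma W_op_eq:
  assumes "length x = N" "length y = N"
  shows "W_op N x y = of_bool (length (filter id x) = 1) * of_bool (length (filter id y) = 1) / of_nat N"
proof -
  have "of_real (sqrt (real N)) * cnj (of_real (sqrt (real N))) = (of_nat N :: complex)"
    by (simp flip: of_real_mult)
  then show ?thesis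
    using assms by (simp add: W_op_def W_ket_def field_simps)
qed

lemma traceN_W_op:
  "traceN N P (W_op N) = (\<Sum>a<N. \<Sum>b<N. P (single_excitation N b) (single_excitation N a)) / of_nat N"
proof -
  let ?E = "{x. length x = N \<and> length (filter id x) = 1}"
  have E: "?E = bitstrings N \<inter> {x. length (filter id x) = 1}"
    by (auto simp: bitstrings_def)
  have "traceN N P (W_op N) = (\<Sum>x\<in>bitstrings N. of_bool (length (filter id x) = 1) *
      (\<Sum>y\<in>bitstrings N. of_bool (length (filter id y) = 1) * P y x)) / of_nat N"
    unfolding traceN_def sum_divide_distrib sum_distrib_left
    by (intro sum.cong refl) (simp add: W_op_eq bitstrings_def)
  also have "\<dots> = (\<Sum>x\<in>?E. \<Sum>y\<in>?E. P y x) / of_nat N"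
    unfolding E by (simp add: finite_bitstrings)
  also have "\<dots> = (\<Sum>a<N. \<Sum>b<N. P (single_excitation N b) (single_excitation N a)) / of_nat N"
    unfolding single_excitations_eq by (simp add: sum.reindex[OF inj_on_single_excitation])
  finally show ?thesis .
qed

lemma tensorN_xz_string_single_excitation:
  assumes "0 < j" "j \<le> N" "a < N" "b < N"
  shows "tensorN N (xz_string j) (single_excitation N b) (single_excitation N a)
           = of_bool (a \<noteq> b \<and> {a, b} = {..<j})"
proof (cases "a \<noteq> b \<and> {a, b} = {..<j}")
  case True
  then have "xz_string j k (k = b) (k = a) = 1" for k
    by (auto simp: xz_string_def sigmaX_def sigmaZ_def)
  then show ?thesis using True by (simp add: tensorN_def)
next
  case False
  have "\<exists>k<N. xz_string j k (k = b) (k = a) = 0"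
  proof (cases "a = b")
    case True
    then show ?thesis using assms by (auto simp: xz_string_def sigmaX_def intro!: exI[of _ 0])
  next
    case False
    with \<open>\<not> (a \<noteq> b \<and> {a, b} = {..<j})\<close> obtain k where "k < j \<and> k \<notin> {a, b} \<or> k \<in> {a, b} \<and> \<not> k < j"
      by blast
    then show ?thesis using False assms
      by (auto simp: xz_string_def sigmaX_def sigmaZ_def intro!: exI[of _ k])
  qed
  then show ?thesis using False by (auto simp: tensorN_def intro: prod_zero)
qed

lemma traceN_xz_string_W_op:
  assumes "0 < j" "j \<le> N"
  shows "traceN N (tensorN N (xz_string j)) (W_op N) = of_bool (j = 2) * 2 / of_nat N"
proof -
  let ?Q = "\<lambda>(a, b). a \<noteq> b \<and> {a, b} = {..<j}"
  have pairs: "{..<N} \<times> {..<N} \<inter> {p. ?Q p} = (if j = 2 then {(0, 1), (1, 0)} else {})"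
  proof -
    have "j = 2 \<and> (a, b) \<in> {(0, 1), (1, 0)}" if "a \<noteq> b" "{a, b} = {..<j}" for a b :: nat
    proof -
      have "j = 2" using arg_cong[OF that(2), of card] that(1) by simp
      moreover have "a < 2" "b < 2" using that(2) \<open>j = 2\<close> by auto
      ultimately show ?thesis using that(1) by (auto simp: numeral_2_eq_2 less_Suc_eq)
    qed
    then show ?thesis using assms by (auto simp: numeral_2_eq_2 lessThan_Suc)
  qed
  have "(\<Sum>a<N. \<Sum>b<N. tensorN N (xz_string j) (single_excitation N b) (single_excitation N a))
      = (\<Sum>p\<in>{..<N} \<times> {..<N}. of_bool (?Q p))"
    using assms by (simp add: sum.cartesian_product tensorN_xz_string_single_excitation split_def
        del: sum_of_bool_eq)
  also have "\<dots> = of_bool (j = 2) * 2"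
    using pairs by simp
  finally show ?thesis by (simp add: traceN_W_op)
qed

lemma CS_decomp_W_op_lower_bound:
  assumes N2: "2 \<le> N" and "CS_decomp N (W_op N) n"
  shows "N - 1 \<le> n"
proof -
  obtain b c d \<alpha> where dec: "\<And>x y. length x = N \<Longrightarrow> length y = N \<Longrightarrow>
      W_op N x y = (\<Sum>i=1..n. \<Sum>j=0..N.
                      of_real (\<alpha> i j) * sym_sum N j (pauli_comb (b i) (c i) (d i)) x y)"
    using assms(2) unfolding CS_decomp_def by blast
  let ?\<mu> = "\<lambda>j. \<Sum>i\<in>{1..n}. complex_of_real (\<alpha> i 0) * (2 * of_real (b i)) ^ j * (2 * of_real (d i)) ^ (N - j)"
  have moments: "traceN N (tensorN N (xz_string j)) (W_op N) = ?\<mu> j" if "j \<le> N" for j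
  proof -
    have "traceN N (tensorN N (xz_string j)) (W_op N)
        = (\<Sum>i=1..n. \<Sum>i'=0..N. of_real (\<alpha> i i') *
             traceN N (tensorN N (xz_string j)) (sym_sum N i' (pauli_comb (b i) (c i) (d i))))"
      by (simp add: traceN_cong[OF dec] traceN_sum traceN_scale)
    then show ?thesis
      using that by (simp add: traceN_xz_string_sym_sum if_distrib sum.delta mult.assoc cong: if_cong)
  qed
  have "N + 1 \<le> card {1..n} + 2"
  proof (rule card_ge_of_moment_gap)
    have "?\<mu> 2 = 2 / of_nat N"
      using moments[OF N2] traceN_xz_string_W_op[of 2 N] N2 by simp
    then show "?\<mu> 2 \<noteq> 0"
      using N2 by simp
    show "?\<mu> j = 0" if "2 < j" "j \<le> N" for j
      using moments[of j] traceN_xz_string_W_op[of j N] that by simp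
  qed (use N2 in auto)
  then show ?thesis by simp
qed

section \<open>Existence of a decomposition\<close>

definition moment :: "(real \<times> real) list \<Rightarrow> nat \<Rightarrow> real" where
  "moment cs a = (\<Sum>(w, t)\<leftarrow>cs. w * t ^ a)"

lemma moment_append: "moment (cs @ ds) a = moment cs a + moment ds a"
  by (simp add: moment_def)

lemma moment_scale: "moment (map (\<lambda>(w, t). (c * w, t)) cs) a = c * moment cs a"
  by (induction cs) (auto simp: moment_def algebra_simps)

lemma moment_shift:
  "moment (map (\<lambda>(w, t). (w, t + 1)) cs) a = (\<Sum>v\<le>a. of_nat (a choose v) * moment cs v)"
proof (induction cs)
  case (Cons p cs)
  obtain w t where p: "p = (w, t)" by fastforce
  have "(t + 1) ^ a = (\<Sum>v\<le>a. of_nat (a choose v) * t ^ v)"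
    using binomial_ring[of t 1 a] by simp
  then show ?case
    using Cons by (simp add: p moment_def sum_distrib_left sum.distrib algebra_simps)
qed (simp add: moment_def)

definition nonneg_nodes :: "(real \<times> real) list \<Rightarrow> bool" where
  "nonneg_nodes cs \<longleftrightarrow> (\<forall>(w, t)\<in>set cs. 0 \<le> t)"

text \<open>If \<open>cs\<close> picks the coefficient of \<open>t ^ N\<close> from polynomials of degree \<open>\<le> N\<close>, then
  \<open>ds\<close> applies this to \<open>((t + 1) ^ a - t ^ a) / (N + 1)\<close>, of degree \<open>a - 1\<close> with leading
  coefficient \<open>a / (N + 1)\<close>.\<close>
lemma moments_unit_vector_Suc:
  assumes "nonneg_nodes cs" "\<And>a. a \<le> N \<Longrightarrow> moment cs a = of_bool (a = N)"
  shows "\<exists>ds. nonneg_nodes ds \<and> (\<forall>a\<le>Suc N. moment ds a = of_bool (a = Suc N))"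
proof -
  define ds where "ds = map (\<lambda>(w, t). (1 / (N + 1) * w, t)) (map (\<lambda>(w, t). (w, t + 1)) cs)
                        @ map (\<lambda>(w, t). (- 1 / (N + 1) * w, t)) cs"
  have ds_moment: "moment ds a = ((\<Sum>v\<le>a. of_nat (a choose v) * moment cs v) - moment cs a) / (N + 1)"
    for a
    unfolding ds_def moment_append moment_scale moment_shift by (simp add: diff_divide_distrib)
  have below: "(\<Sum>v\<le>a. f v * moment cs v) = of_bool (a = N) * f N" if "a \<le> N" for a f
  proof -
    have "(\<Sum>v\<le>a. f v * moment cs v) = (\<Sum>v\<le>a. f v * of_bool (v = N))"
      using that assms(2) by (intro sum.cong) auto
    then show ?thesis using that by (cases "a = N") auto
  qed
  have "moment ds a = of_bool (a = Suc N)" if "a \<le> Suc N" for a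
  proof (cases "a = Suc N")
    case True
    then show ?thesis using below[of N "\<lambda>v. of_nat (Suc N choose v)"] by (simp add: ds_moment)
  next
    case False
    with that have "a \<le> N" by simp
    then show ?thesis
      using below[of a "\<lambda>v. of_nat (a choose v)"] assms(2)[of a] by (simp add: ds_moment)
  qed
  moreover have "nonneg_nodes ds"
    using assms(1) by (auto simp: nonneg_nodes_def ds_def)
  ultimately show ?thesis by blast
qed

lemma moments_unit_vector:
  "k \<le> N \<Longrightarrow> \<exists>cs. nonneg_nodes cs \<and> (\<forall>a\<le>N. moment cs a = of_bool (a = k))"
proof (induction N arbitrary: k)
  case 0
  then show ?case
    by (intro exI[of _ "[(1, 0)]"]) (simp add: nonneg_nodes_def moment_def)
next
  case (Suc N)
  obtain ds where ds: "nonneg_nodes ds" "\<forall>a\<le>Suc N. moment ds a = of_bool (a = Suc N)"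
    using Suc.IH[of N] moments_unit_vector_Suc by blast
  show ?case
  proof (cases "k = Suc N")
    case False
    with Suc.prems have "k \<le> N" by simp
    then obtain cs where cs: "nonneg_nodes cs" "\<forall>a\<le>N. moment cs a = of_bool (a = k)"
      using Suc.IH by blast
    define cs' where "cs' = cs @ map (\<lambda>(w, t). (- moment cs (Suc N) * w, t)) ds"
    have "moment cs' a = moment cs a - moment cs (Suc N) * moment ds a" for a
      unfolding cs'_def moment_append moment_scale by simp
    then have "\<forall>a\<le>Suc N. moment cs' a = of_bool (a = k)"
      using cs(2) ds(2) False by (auto simp: le_Suc_eq)
    moreover have "nonneg_nodes cs'"
      using cs(1) ds(1) by (auto simp: nonneg_nodes_def cs'_def)
    ultimately show ?thesis by blast
  qed (use ds in blast)
qed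

lemma sum_cis_multiples:
  assumes "0 < K" "\<bar>m\<bar> < int K"
  shows "(\<Sum>l<K. cis (2 * pi * real l * of_int m / real K)) = of_bool (m = 0) * of_nat K"
proof (cases "m = 0")
  case False
  define \<omega> where "\<omega> = cis (2 * pi * of_int m / real K)"
  have "\<omega> \<noteq> 1"
  proof
    assume "\<omega> = 1"
    then obtain n :: int where "2 * pi * of_int m / real K = of_int n * 2 * pi"
      by (auto simp: \<omega>_def complex_eq_iff cos_one_2pi_int)
    then have "real_of_int m = real_of_int (n * int K)" using assms(1) by (simp add: field_simps)
    then have "m = n * int K" by (simp only: of_int_eq_iff)
    with False assms(2) show False by (simp add: abs_mult)
  qed
  moreover have "\<omega> ^ K = 1"
    using assms(1) cis_multiple_2pi[of "of_int m"] by (simp add: \<omega>_def DeMoivre)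
  ultimately have "(\<Sum>l<K. \<omega> ^ l) = 0"
    by (simp add: geometric_sum)
  then show ?thesis
    using False by (simp add: \<omega>_def DeMoivre mult_ac)
qed simp

lemma sum_phase_rotations:
  assumes "0 < K" "a < K" "b < K"
  shows "(\<Sum>l<K. (of_real r * cis (- (2 * pi * real l / K))) ^ a * (of_real r * cis (2 * pi * real l / K)) ^ b)
           = of_bool (a = b) * of_nat K * of_real r ^ (a + b)"
proof -
  have rotate: "(of_real r * cis (- x)) ^ a * (of_real r * cis x) ^ b
      = of_real r ^ (a + b) * cis (x * (real b - real a))" for x
  proof -
    have "(of_real r * cis (- x)) ^ a * (of_real r * cis x) ^ b
        = of_real r ^ (a + b) * (cis (- x) ^ a * cis x ^ b)"
      by (simp only: power_mult_distrib power_add mult_ac)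
    also have "cis (- x) ^ a * cis x ^ b = cis (x * (real b - real a))"
      by (simp add: DeMoivre cis_mult right_diff_distrib mult.commute)
    finally show ?thesis .
  qed
  have "\<bar>int b - int a\<bar> < int K" using assms by linarith
  from sum_cis_multiples[OF assms(1) this]
  have "(\<Sum>l<K. cis (2 * pi * real l / K * (real b - real a))) = of_bool (a = b) * of_nat K"
    by simp
  then show ?thesis
    by (simp only: rotate flip: sum_distrib_left) (simp only: mult_ac)
qed

lemma prod_nth_eq_power_count:
  "f False = 1 \<Longrightarrow> (\<Prod>k<length x. f (x ! k)) = f True ^ length (filter id x)"
proof (induction x)
  case (Cons a x)
  then show ?case
    by (cases a) (simp_all add: prod.lessThan_Suc_shift del: prod.lessThan_Suc)
qed simp

lemma tensorN_if_eq_prod: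
  assumes "S \<subseteq> {..<N}"
  shows "tensorN N (\<lambda>k. if k \<in> S then A else B) x y
           = (\<Prod>k\<in>S. A (x ! k) (y ! k)) * (\<Prod>k\<in>{..<N} - S. B (x ! k) (y ! k))"
proof -
  have "tensorN N (\<lambda>k. if k \<in> S then A else B) x y
      = (\<Prod>k<N. if k \<in> S then A (x ! k) (y ! k) else B (x ! k) (y ! k))"
    unfolding tensorN_def by (intro prod.cong) auto
  also have "\<dots> = (\<Prod>k\<in>{..<N} \<inter> S. A (x ! k) (y ! k)) * (\<Prod>k\<in>{..<N} - S. B (x ! k) (y ! k))"
    by (simp add: prod.If_cases Diff_eq)
  finally show ?thesis using assms by (simp add: Int_absorb1)
qed

lemma prod_add_Id1_eq_sum_sym_sum:
  "(\<Prod>k<N. s * Id1 (x ! k) (y ! k) + A (x ! k) (y ! k)) = (\<Sum>j=0..N. s ^ j * sym_sum N j A x y)"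
proof -
  have "(\<Prod>k<N. s * Id1 (x ! k) (y ! k) + A (x ! k) (y ! k))
      = (\<Sum>S\<in>Pow {..<N}. s ^ card S * tensorN N (\<lambda>k. if k \<in> S then Id1 else A) x y)"
    unfolding prod_add[OF finite_lessThan]
    by (intro sum.cong refl) (auto simp: tensorN_if_eq_prod prod.distrib finite_subset mult.assoc)
  also have "\<dots> = (\<Sum>j\<in>{0..N}. \<Sum>S\<in>{S \<in> Pow {..<N}. card S = j}.
                      s ^ card S * tensorN N (\<lambda>k. if k \<in> S then Id1 else A) x y)"
    by (rule sum.group[symmetric]) (auto dest: card_mono[rotated])
  also have "\<dots> = (\<Sum>j=0..N. s ^ j * sym_sum N j A x y)"
    unfolding sym_sum_def by (intro sum.cong refl) (simp add: sum_distrib_left Pow_def conj_commute)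
  finally show ?thesis .
qed

lemma rank_one_qubit_operator:
  "of_real ((1 + r\<^sup>2) / 2) * Id1 u v + pauli_comb (r * cos t) (- r * sin t) ((1 - r\<^sup>2) / 2) u v
     = (if u then of_real r * cis (- t) else 1) * (if v then of_real r * cis t else 1)"
proof -
  have "cis (- t) * cis t = 1"
    by (simp add: cis_mult)
  then have diag: "of_real r * cis (- t) * (of_real r * cis t)
      = of_real ((1 + r\<^sup>2) / 2) - (of_real ((1 - r\<^sup>2) / 2) :: complex)"
    by (simp add: field_simps power2_eq_square)
  have off_diag: "of_real r * cis t = (of_real (r * cos t) + \<i> * of_real (r * sin t) :: complex)"
    "of_real r * cis (- t) = (of_real (r * cos t) - \<i> * of_real (r * sin t) :: complex)"
    by (simp_all add: complex_eq_iff)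
  show ?thesis
  proof (cases u; cases v)
    assume "u" "v"
    then show ?thesis
      using diag by (simp add: Id1_def pauli_comb_def sigmaX_def sigmaY_def sigmaZ_def)
  next
    assume "\<not> u" "\<not> v"
    then show ?thesis
      by (simp add: Id1_def pauli_comb_def sigmaX_def sigmaY_def sigmaZ_def field_simps)
  qed (use off_diag in \<open>simp_all add: Id1_def pauli_comb_def sigmaX_def sigmaY_def sigmaZ_def\<close>)
qed

lemma tensor_power_rank_one_entry:
  assumes "length x = N" "length y = N"
  shows "(\<Sum>j=0..N. of_real (((1 + r\<^sup>2) / 2) ^ j)
            * sym_sum N j (pauli_comb (r * cos t) (- r * sin t) ((1 - r\<^sup>2) / 2)) x y)
         = (of_real r * cis (- t)) ^ length (filter id x) * (of_real r * cis t) ^ length (filter id y)"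
proof -
  have "(\<Sum>j=0..N. of_real (((1 + r\<^sup>2) / 2) ^ j)
          * sym_sum N j (pauli_comb (r * cos t) (- r * sin t) ((1 - r\<^sup>2) / 2)) x y)
      = (\<Prod>k<N. (if x ! k then of_real r * cis (- t) else 1) * (if y ! k then of_real r * cis t else 1))"
    unfolding of_real_power prod_add_Id1_eq_sum_sym_sum[symmetric] rank_one_qubit_operator ..
  also have "\<dots> = (of_real r * cis (- t)) ^ length (filter id x) * (of_real r * cis t) ^ length (filter id y)"
    using prod_nth_eq_power_count[of "\<lambda>u. if u then of_real r * cis (- t) else 1" x]
      prod_nth_eq_power_count[of "\<lambda>u. if u then of_real r * cis t else 1" y]
    by (simp add: prod.distrib assms)
  finally show ?thesis .
qed

lemma CS_decomp_sum_list:
  fixes ps :: "'p list"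
  assumes "\<And>x y. length x = N \<Longrightarrow> length y = N \<Longrightarrow> \<rho> x y =
             (\<Sum>p\<leftarrow>ps. \<Sum>j=0..N. of_real (\<alpha> p j) * sym_sum N j (pauli_comb (b p) (c p) (d p)) x y)"
  shows "CS_decomp N \<rho> (length ps)"
  unfolding CS_decomp_def
proof (intro exI allI impI)
  fix x y :: "bool list" assume "length x = N" "length y = N"
  then show "\<rho> x y = (\<Sum>i=1..length ps. \<Sum>j=0..N. of_real (\<alpha> (ps ! (i - 1)) j)
      * sym_sum N j (pauli_comb (b (ps ! (i - 1))) (c (ps ! (i - 1))) (d (ps ! (i - 1)))) x y)"
    using assms by (simp add: sum.atLeast1_atMost_eq sum_list_sum_nth atLeast0LessThan)
qed

lemma sum_list_map_product:
  fixes f :: "'a \<times> 'b \<Rightarrow> 'c::comm_monoid_add"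
  shows "(\<Sum>q\<leftarrow>List.product xs ys. f q) = (\<Sum>y\<leftarrow>ys. \<Sum>x\<leftarrow>xs. f (x, y))"
  by (induction xs) (simp_all add: sum_list_addf comp_def)

lemma sum_phase_rotations_sqrt:
  assumes "0 \<le> t" "a \<le> N" "b \<le> N"
  shows "(\<Sum>l<Suc N. of_real (w / (real N * Suc N))
            * ((of_real (sqrt t) * cis (- (2 * pi * real l / Suc N))) ^ a
               * (of_real (sqrt t) * cis (2 * pi * real l / Suc N)) ^ b))
         = of_real (w * t ^ a) * (of_bool (a = b) / of_nat N)"
proof -
  have "(\<Sum>l<Suc N. of_real (w / (real N * Suc N))
            * ((of_real (sqrt t) * cis (- (2 * pi * real l / Suc N))) ^ a
               * (of_real (sqrt t) * cis (2 * pi * real l / Suc N)) ^ b))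
      = of_real (w / (real N * Suc N)) * (of_bool (a = b) * of_nat (Suc N) * of_real (sqrt t) ^ (a + b))"
    unfolding sum_distrib_left[symmetric]
    using assms(2,3) by (subst sum_phase_rotations) auto
  also have "\<dots> = of_real (w * t ^ a) * (of_bool (a = b) / of_nat N)"
  proof (cases "a = b")
    case True
    have "of_real (sqrt t) ^ (a + b) = (of_real (t ^ a) :: complex)"
      using assms(1) True by (simp add: power_add flip: power_mult_distrib of_real_mult)
    then show ?thesis
      using True of_nat_neq_0[of N, where 'a = complex] by simp
  qed simp
  finally show ?thesis .
qed

lemma W_op_eq_phase_average:
  assumes cs: "nonneg_nodes cs" "\<forall>a\<le>N. moment cs a = of_bool (a = 1)"
    and xy: "length x = N" "length y = N"
  shows "W_op N x y = (\<Sum>(w, t)\<leftarrow>cs. \<Sum>l<Suc N. of_real (w / (real N * Suc N))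
           * ((of_real (sqrt t) * cis (- (2 * pi * real l / Suc N))) ^ length (filter id x)
              * (of_real (sqrt t) * cis (2 * pi * real l / Suc N)) ^ length (filter id y)))"
    (is "_ = ?average")
proof -
  define na nb where "na = length (filter id x)" and "nb = length (filter id y)"
  have "na \<le> N" "nb \<le> N"
    using xy length_filter_le unfolding na_def nb_def by metis+
  then have "?average = (\<Sum>(w, t)\<leftarrow>cs. of_real (w * t ^ na) * (of_bool (na = nb) / of_nat N))"
    unfolding na_def nb_def using cs(1)
    by (intro arg_cong[where f = sum_list] map_cong refl, clarify)
       (rule sum_phase_rotations_sqrt, auto simp: nonneg_nodes_def)
  also have "\<dots> = of_real (moment cs na) * (of_bool (na = nb) / of_nat N)"
    by (induction cs) (auto simp: moment_def distrib_right add_divide_distrib)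
  also have "\<dots> = W_op N x y"
    using cs(2) \<open>na \<le> N\<close> xy by (simp add: W_op_eq na_def nb_def)
  finally show ?thesis ..
qed

lemma CS_decomp_W_op_exists:
  assumes "0 < N"
  shows "\<exists>n. CS_decomp N (W_op N) n"
proof -
  obtain cs where cs: "nonneg_nodes cs" "\<forall>a\<le>N. moment cs a = of_bool (a = 1)"
    using moments_unit_vector[of 1 N] assms by auto
  define r :: "nat \<times> real \<times> real \<Rightarrow> real" where "r q = sqrt (snd (snd q))" for q
  define \<theta> :: "nat \<times> real \<times> real \<Rightarrow> real" where "\<theta> q = 2 * pi * real (fst q) / Suc N" for q
  define \<alpha> where "\<alpha> q j = fst (snd q) / (real N * Suc N) * ((1 + (r q)\<^sup>2) / 2) ^ j" for q j
  have "CS_decomp N (W_op N) (length (List.product [0..<Suc N] cs))"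
  proof (rule CS_decomp_sum_list)
    fix x y :: "bool list" assume xy: "length x = N" "length y = N"
    have summand: "(\<Sum>j=0..N. of_real (\<alpha> q j)
          * sym_sum N j (pauli_comb (r q * cos (\<theta> q)) (- r q * sin (\<theta> q)) ((1 - (r q)\<^sup>2) / 2)) x y)
        = of_real (fst (snd q) / (real N * Suc N))
          * ((of_real (r q) * cis (- \<theta> q)) ^ length (filter id x)
             * (of_real (r q) * cis (\<theta> q)) ^ length (filter id y))" for q
      unfolding \<alpha>_def of_real_mult mult.assoc sum_distrib_left[symmetric]
        tensor_power_rank_one_entry[OF xy] ..
    show "W_op N x y = (\<Sum>q\<leftarrow>List.product [0..<Suc N] cs. \<Sum>j=0..N. of_real (\<alpha> q j)
          * sym_sum N j (pauli_comb (r q * cos (\<theta> q)) (- r q * sin (\<theta> q)) ((1 - (r q)\<^sup>2) / 2)) x y)"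
      unfolding summand sum_list_map_product
      by (simp add: W_op_eq_phase_average[OF cs xy] r_def \<theta>_def interv_sum_list_conv_sum_set_nat
          atLeast0LessThan split_def)
  qed
  then show ?thesis ..
qed

theorem corollary2:
  fixes N :: nat
  assumes "N \<ge> 2"
  shows "N - 1 \<le> C_S N (W_op N)"
  unfolding C_S_def
proof (rule LeastI2_ex)
  show "\<exists>n. CS_decomp N (W_op N) n"
    using CS_decomp_W_op_exists assms by simp
  show "N - 1 \<le> n" if "CS_decomp N (W_op N) n" for n
    using CS_decomp_W_op_lower_bound assms that by blast
qed

end
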